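(* Under the standing assumptions, let $\vec v$ be a demand vector, let $(\vec v,\vec v_1)$ be an $(s,t_1)$-adjacent pair with switching cost $2$ and intermediate task $i_1$, and let $(\vec v,\vec v_2)$ be an $(s,t_2)$-adjacent pair with switching cost $2$ and intermediate task $i_2$. Then the tasks $s,i_1,t_1,i_2,t_2$ are not all distinct.
   Context: Standing assumptions: $n\ge 4$, $k\ge 5$, and $f_1,\dots,f_n$ are functions from demand vectors to $[k]$ satisfying the demand (for every demand vector $\vec v$ and task $j$, exactly $v_j$ agents $a$ have $f_a(\vec v)=j$), with maximum switching cost at most $2$. A demand vector is $\vec v=(v_1,\dots,v_k)$ of non-negative integers with $\sum v_j=n$. The switching cost of $(\vec v,\vec v')$ is the number of agents $a$ with $f_a(\vec v)\ne f_a(\vec v')$; $\vec v,\vec v'$ are adjacent if $\|\vec v-\vec v'\|_1=2$. An ordered pair $(\vec v_1,\vec v_2)$ is $(s,t)$-adjacent if $s\ne t$ and $\vec v_2$ is obtained from $\vec v_1$ by moving one unit of demand from task $s$ to task $t$. Agent $a$ is $(i,j)$-mobile with respect to $(\vec v_1,\vec v_2)$ if $f_a(\vec v_1)=i$, $f_a(\vec v_2)=j$, $i\ne j$. If $(\vec v_1,\vec v_2)$ is $(s,t)$-adjacent with switching cost $2$, then there is a task $i\notin\{s,t\}$ such that one switching agent is $(s,i)$-mobile and the other is $(i,t)$-mobile; $i$ is called the intermediate task of $(\vec v_1,\vec v_2)$. *)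

theory Defs
  imports Main
begin

definition demand_vec :: "nat \<Rightarrow> nat \<Rightarrow> (nat \<Rightarrow> nat) \<Rightarrow> bool" where
  "demand_vec n k v \<longleftrightarrow> (\<forall>j. j \<notin> {1..k} \<longrightarrow> v j = 0) \<and> (\<Sum>j\<in>{1..k}. v j) = n"

text \<open>f a v is the task assigned to agent a under demand vector v.\<close>
definition satisfies_demand :: "nat \<Rightarrow> nat \<Rightarrow> (nat \<Rightarrow> (nat \<Rightarrow> nat) \<Rightarrow> nat) \<Rightarrow> bool" where
  "satisfies_demand n k f \<longleftrightarrow>
     (\<forall>v. demand_vec n k v \<longrightarrow>
        (\<forall>a\<in>{1..n}. f a v \<in> {1..k}) \<and>
        (\<forall>j\<in>{1..k}. card {a\<in>{1..n}. f a v = j} = v j))"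

definition switching_cost :: "nat \<Rightarrow> (nat \<Rightarrow> (nat \<Rightarrow> nat) \<Rightarrow> nat) \<Rightarrow> (nat \<Rightarrow> nat) \<Rightarrow> (nat \<Rightarrow> nat) \<Rightarrow> nat" where
  "switching_cost n f v w = card {a\<in>{1..n}. f a v \<noteq> f a w}"

definition adjacent :: "nat \<Rightarrow> (nat \<Rightarrow> nat) \<Rightarrow> (nat \<Rightarrow> nat) \<Rightarrow> bool" where
  "adjacent k v w \<longleftrightarrow> (\<Sum>j\<in>{1..k}. (if v j \<le> w j then w j - v j else v j - w j)) = 2"

definition max_switching_cost_le :: "nat \<Rightarrow> nat \<Rightarrow> (nat \<Rightarrow> (nat \<Rightarrow> nat) \<Rightarrow> nat) \<Rightarrow> nat \<Rightarrow> bool" where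
  "max_switching_cost_le n k f c \<longleftrightarrow>
     (\<forall>v w. demand_vec n k v \<and> demand_vec n k w \<and> adjacent k v w \<longrightarrow> switching_cost n f v w \<le> c)"

definition st_adjacent :: "nat \<Rightarrow> nat \<Rightarrow> (nat \<Rightarrow> nat) \<Rightarrow> (nat \<Rightarrow> nat) \<Rightarrow> nat \<Rightarrow> nat \<Rightarrow> bool" where
  "st_adjacent n k v w s t \<longleftrightarrow> demand_vec n k v \<and> demand_vec n k w \<and>
     s \<in> {1..k} \<and> t \<in> {1..k} \<and> s \<noteq> t \<and> v s \<ge> 1 \<and>
     w = v(s := v s - 1, t := v t + 1)"

definition mobile :: "(nat \<Rightarrow> (nat \<Rightarrow> nat) \<Rightarrow> nat) \<Rightarrow> nat \<Rightarrow> (nat \<Rightarrow> nat) \<Rightarrow> (nat \<Rightarrow> nat) \<Rightarrow> nat \<Rightarrow> nat \<Rightarrow> bool" where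
  "mobile f a v w i j \<longleftrightarrow> f a v = i \<and> f a w = j \<and> i \<noteq> j"

definition intermediate_task :: "nat \<Rightarrow> nat \<Rightarrow> (nat \<Rightarrow> (nat \<Rightarrow> nat) \<Rightarrow> nat) \<Rightarrow> (nat \<Rightarrow> nat) \<Rightarrow> (nat \<Rightarrow> nat) \<Rightarrow> nat \<Rightarrow> nat \<Rightarrow> nat \<Rightarrow> bool" where
  "intermediate_task n k f v w s t i \<longleftrightarrow> st_adjacent n k v w s t \<and> switching_cost n f v w = 2 \<and>
     i \<in> {1..k} \<and> i \<notin> {s, t} \<and>
     (\<exists>a\<in>{1..n}. \<exists>b\<in>{1..n}. a \<noteq> b \<and> mobile f a v w s i \<and> mobile f b v w i t)"

end

theory Submission
  imports Defs
begin

text \<open>Moving a unit from s to t1 and a unit from s to t2 leaves demand vectors that differ by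
  moving one unit from t2 to t1. Both moves change the common assignment at v in only two agents,
  and if s, i1, t1, i2, t2 were distinct, the agent moving into t1, the agent moving into t2 and
  the agent leaving s towards i1 would be three agents assigned differently at the two adjacent
  vectors, exceeding switching cost 2.\<close>

lemma adjacent_of_common_source:
  assumes "st_adjacent n k v w1 s t1" and "st_adjacent n k v w2 s t2" and "t1 \<noteq> t2"
  shows "adjacent k w1 w2"
proof -
  from assms have w1: "w1 = v(s := v s - 1, t1 := v t1 + 1)"
    and w2: "w2 = v(s := v s - 1, t2 := v t2 + 1)"
    and t12: "{t1, t2} \<subseteq> {1..k}" "s \<noteq> t1" "s \<noteq> t2"
    by (auto simp: st_adjacent_def)
  have "(if w1 j \<le> w2 j then w2 j - w1 j else w1 j - w2 j) = (if j \<in> {t1, t2} then 1 else 0)"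
    for j using t12 \<open>t1 \<noteq> t2\<close> by (auto simp: w1 w2)
  then have "(\<Sum>j\<in>{1..k}. if w1 j \<le> w2 j then w2 j - w1 j else w1 j - w2 j)
      = (\<Sum>j\<in>{1..k}. if j \<in> {t1, t2} then 1 else 0)"
    by simp
  also have "\<dots> = (\<Sum>j\<in>{t1, t2}. 1)"
    using t12 by (intro sum.mono_neutral_cong_right) auto
  also have "\<dots> = 2"
    using \<open>t1 \<noteq> t2\<close> by simp
  finally show ?thesis
    unfolding adjacent_def .
qed

lemma switching_cost_le_of_common_source:
  assumes "max_switching_cost_le n k f c"
    and "st_adjacent n k v w1 s t1" and "st_adjacent n k v w2 s t2" and "t1 \<noteq> t2"
  shows "switching_cost n f w1 w2 \<le> c"
proof -
  have "adjacent k w1 w2"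
    using adjacent_of_common_source[OF assms(2-4)] .
  with assms(1-3) show ?thesis
    unfolding max_switching_cost_le_def st_adjacent_def by blast
qed

lemma switching_agents_eq_pair:
  assumes "switching_cost n f v w = 2"
    and "a \<in> {1..n}" "b \<in> {1..n}" "a \<noteq> b" "f a v \<noteq> f a w" "f b v \<noteq> f b w"
  shows "{c \<in> {1..n}. f c v \<noteq> f c w} = {a, b}"
proof (rule sym, rule card_subset_eq)
  show "{a, b} \<subseteq> {c \<in> {1..n}. f c v \<noteq> f c w}"
    using assms by auto
  show "card {a, b} = card {c \<in> {1..n}. f c v \<noteq> f c w}"
    using assms unfolding switching_cost_def by simp
qed simp

lemma intermediate_task_agents:
  assumes "intermediate_task n k f v w s t i"
  obtains a b where "a \<in> {1..n}" "b \<in> {1..n}" "a \<noteq> b"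
    "f a v = s" "f a w = i" "f b v = i" "f b w = t"
    "\<And>c. c \<in> {1..n} \<Longrightarrow> c \<notin> {a, b} \<Longrightarrow> f c w = f c v"
proof -
  from assms obtain a b where ab: "a \<in> {1..n}" "b \<in> {1..n}" "a \<noteq> b"
      "mobile f a v w s i" "mobile f b v w i t" and cost: "switching_cost n f v w = 2"
    unfolding intermediate_task_def by blast
  then have switching: "{c \<in> {1..n}. f c v \<noteq> f c w} = {a, b}"
    using switching_agents_eq_pair[OF cost ab(1-3)] by (simp add: mobile_def)
  have "f c w = f c v" if "c \<in> {1..n}" "c \<notin> {a, b}" for c
  proof (rule ccontr)
    assume "f c w \<noteq> f c v"
    with \<open>c \<in> {1..n}\<close> have "c \<in> {c \<in> {1..n}. f c v \<noteq> f c w}"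
      by simp
    with switching \<open>c \<notin> {a, b}\<close> show False
      by blast
  qed
  with ab show thesis
    using that[of a b] by (simp add: mobile_def)
qed

lemma three_le_switching_cost:
  assumes "{a, b, c} \<subseteq> {x \<in> {1..n}. f x v \<noteq> f x w}" and "distinct [a, b, c]"
  shows "3 \<le> switching_cost n f v w"
proof -
  have "card {a, b, c} = 3"
    using assms(2) by simp
  then show ?thesis
    unfolding switching_cost_def using card_mono[OF _ assms(1)] by simp
qed

theorem lemma4p6:
  fixes n k :: nat and f :: "nat \<Rightarrow> (nat \<Rightarrow> nat) \<Rightarrow> nat"
    and v v1 v2 :: "nat \<Rightarrow> nat" and s t1 t2 i1 i2 :: nat
  assumes "n \<ge> 4" and "k \<ge> 5"
    and "satisfies_demand n k f"
    and "max_switching_cost_le n k f 2"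
    and "demand_vec n k v"
    and "st_adjacent n k v v1 s t1" and "switching_cost n f v v1 = 2"
    and "intermediate_task n k f v v1 s t1 i1"
    and "st_adjacent n k v v2 s t2" and "switching_cost n f v v2 = 2"
    and "intermediate_task n k f v v2 s t2 i2"
  shows "\<not> distinct [s, i1, t1, i2, t2]"
proof
  assume dist: "distinct [s, i1, t1, i2, t2]"
  obtain a1 b1 where agents1: "a1 \<in> {1..n}" "b1 \<in> {1..n}" "a1 \<noteq> b1"
      "f a1 v = s" "f a1 v1 = i1" "f b1 v = i1" "f b1 v1 = t1"
      "\<And>c. c \<in> {1..n} \<Longrightarrow> c \<notin> {a1, b1} \<Longrightarrow> f c v1 = f c v"
    using intermediate_task_agents[OF assms(8)] by blast
  obtain a2 b2 where agents2: "a2 \<in> {1..n}" "b2 \<in> {1..n}" "a2 \<noteq> b2"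
      "f a2 v = s" "f a2 v2 = i2" "f b2 v = i2" "f b2 v2 = t2"
      "\<And>c. c \<in> {1..n} \<Longrightarrow> c \<notin> {a2, b2} \<Longrightarrow> f c v2 = f c v"
    using intermediate_task_agents[OF assms(11)] by blast
  have "b1 \<notin> {a2, b2}" "b2 \<notin> {a1, b1}" "a1 \<noteq> b2"
    using agents1(4,6) agents2(4,6) dist by auto
  then have b: "f b1 v2 = i1" "f b2 v1 = i2"
    using agents1(2,6,8) agents2(2,6,8) by simp_all
  have a1: "f a1 v2 \<noteq> i1"
  proof (cases "a1 = a2")
    case False
    with \<open>a1 \<noteq> b2\<close> have "f a1 v2 = s"
      using agents1(1,4) agents2(8) by simp
    with dist show ?thesis by simp
  qed (use agents2(5) dist in auto)
  have switching: "{a1, b1, b2} \<subseteq> {a \<in> {1..n}. f a v1 \<noteq> f a v2}"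
    using a1 b agents1(1,2,5,7) agents2(2,7) dist by auto
  have "distinct [a1, b1, b2]"
    using \<open>a1 \<noteq> b1\<close> \<open>a1 \<noteq> b2\<close> \<open>b1 \<notin> {a2, b2}\<close> by simp
  then have "3 \<le> switching_cost n f v1 v2"
    by (rule three_le_switching_cost[of a1 b1 b2 n f v1 v2, OF switching])
  moreover have "switching_cost n f v1 v2 \<le> 2"
    using switching_cost_le_of_common_source[OF assms(4,6,9)] dist by simp
  ultimately show False
    by simp
qed

end
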